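(* Let $n \geq 1$ and $m \geq 1$ be integers. The corona graph $P_n \circ P_m$ is a total edge product cordial graph, except when $n = m = 1$ (in which case it is not).
   Context: All graphs are finite and simple. $P_k$ denotes the path on $k$ vertices. For graphs $G$ and $H$ with $V(G)=\{u_1,\dots,u_n\}$, the corona graph $G \circ H$ is obtained by taking one copy of $G$ and $n$ disjoint copies $H^1,\dots,H^n$ of $H$, and joining each vertex $u_i$ by an edge to every vertex of $H^i$. Given an edge labeling $f^*: E(G) \to \{0,1\}$, the induced vertex labeling $f: V(G)\to\{0,1\}$ is $f(v) = \prod\{f^*(uv) : uv \in E(G)\}$ (product of the labels of edges incident to $v$). Let $v_f(i)$ be the number of vertices with $f(v)=i$ and $e_f(i)$ the number of edges with $f^*(e)=i$, for $i=0,1$. The labeling $f^*$ is a total edge product cordial labeling if $|(v_f(0)+e_f(0)) - (v_f(1)+e_f(1))| \leq 1$, and a graph is total edge product cordial if it admits such a labeling. *)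

theory Defs
  imports Main
begin

text \<open>A finite simple graph is represented as a pair (V, E) of a vertex set and a set of
  edges, each edge being a two-element subset of V.\<close>

type_synonym 'a graph = "'a set \<times> 'a set set"

definition simple_graph :: "'a graph \<Rightarrow> bool" where
  "simple_graph G \<longleftrightarrow> finite (fst G) \<and>
     (\<forall>e\<in>snd G. \<exists>u v. u \<noteq> v \<and> e = {u, v} \<and> u \<in> fst G \<and> v \<in> fst G)"

definition path_graph :: "nat \<Rightarrow> nat graph" where
  "path_graph k = ({0..<k}, {{i, Suc i} | i. Suc i < k})"

text \<open>Corona G o H: one copy of G (vertices Inl u) and for every vertex u of G a copy H^u
  of H (vertices Inr (u, h)), with u joined to every vertex of H^u.\<close>
definition corona :: "'a graph \<Rightarrow> 'b graph \<Rightarrow> ('a + ('a \<times> 'b)) graph" where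
  "corona G H =
    (Inl ` fst G \<union> Inr ` (fst G \<times> fst H),
     {{Inl u, Inl v} | u v. {u, v} \<in> snd G}
     \<union> {{Inr (u, a), Inr (u, b)} | u a b. u \<in> fst G \<and> {a, b} \<in> snd H}
     \<union> {{Inl u, Inr (u, h)} | u h. u \<in> fst G \<and> h \<in> fst H})"

definition induced_vlabel :: "'a graph \<Rightarrow> ('a set \<Rightarrow> nat) \<Rightarrow> 'a \<Rightarrow> nat" where
  "induced_vlabel G f v = (\<Prod>e\<in>{e\<in>snd G. v \<in> e}. f e)"

definition v_count :: "'a graph \<Rightarrow> ('a set \<Rightarrow> nat) \<Rightarrow> nat \<Rightarrow> nat" where
  "v_count G f i = card {v\<in>fst G. induced_vlabel G f v = i}"

definition e_count :: "'a graph \<Rightarrow> ('a set \<Rightarrow> nat) \<Rightarrow> nat \<Rightarrow> nat" where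
  "e_count G f i = card {e\<in>snd G. f e = i}"

definition total_edge_product_cordial_labeling :: "'a graph \<Rightarrow> ('a set \<Rightarrow> nat) \<Rightarrow> bool" where
  "total_edge_product_cordial_labeling G f \<longleftrightarrow>
     (\<forall>e\<in>snd G. f e \<in> {0, 1}) \<and>
     \<bar>(int (v_count G f 0) + int (e_count G f 0)) - (int (v_count G f 1) + int (e_count G f 1))\<bar> \<le> 1"

definition total_edge_product_cordial :: "'a graph \<Rightarrow> bool" where
  "total_edge_product_cordial G \<longleftrightarrow> (\<exists>f. total_edge_product_cordial_labeling G f)"

end

theory Submission imports Defs begin

(* A 0/1 edge labelling is determined by its set Z of 0-edges, and a vertex gets the product
   label 0 exactly when some edge of Z covers it.  Hence a simple graph (V, E) is total edge
   product cordial iff some Z \<subseteq> E has |2 (card (\<Union>Z) + card Z) - (card V + card E)| \<le> 1.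
   In P_n o P_m, with card V + card E = 3nm + n - 1, take for Z all spokes and path edges of the
   first a pendant copies, j spokes and q < j path edges of copy a, and p \<le> a edges of the base
   path: then card (\<Union>Z) + card Z = 3am + 2j + q + p + 1, and a parity case split on n and m
   chooses the parameters.  For n = m = 1 the graph is a single edge, and the only choices
   Z = {} and Z = E give 0 and 6 against 3. *)

lemma simple_graph_edges_subset:
  assumes "simple_graph G"
  shows "snd G \<subseteq> Pow (fst G)"
  using assms unfolding simple_graph_def by auto

lemma simple_graph_finite_edges:
  assumes "simple_graph G"
  shows "finite (snd G)"
proof -
  have "finite (Pow (fst G))"
    using assms unfolding simple_graph_def by simp
  then show ?thesis
    using finite_subset[OF simple_graph_edges_subset[OF assms]] by blast
qed

lemma simple_graph_Union_edges:
  assumes "simple_graph G"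
  shows "\<Union>(snd G) \<subseteq> fst G"
  using simple_graph_edges_subset[OF assms] by blast

lemma simple_graph_edgeD:
  assumes "simple_graph G" and "{u, v} \<in> snd G"
  shows "u \<noteq> v" and "u \<in> fst G" and "v \<in> fst G"
  using assms unfolding simple_graph_def by (fastforce simp: doubleton_eq_iff)+

lemma simple_graph_path_graph: "simple_graph (path_graph k)"
  unfolding simple_graph_def
proof (intro conjI ballI)
  show "finite (fst (path_graph k))"
    by (simp add: path_graph_def)
next
  fix e assume "e \<in> snd (path_graph k)"
  then obtain i where "e = {i, Suc i}" and "Suc i < k"
    by (auto simp: path_graph_def)
  then show "\<exists>u v. u \<noteq> v \<and> e = {u, v} \<and> u \<in> fst (path_graph k) \<and> v \<in> fst (path_graph k)"
    by (intro exI[of _ i] exI[of _ "Suc i"]) (simp add: path_graph_def)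
qed

lemma corona_edgeE:
  assumes "e \<in> snd (corona G H)"
  obtains (base) u v where "e = {Inl u, Inl v}" "{u, v} \<in> snd G"
    | (copy) u a b where "e = {Inr (u, a), Inr (u, b)}" "u \<in> fst G" "{a, b} \<in> snd H"
    | (spoke) u h where "e = {Inl u, Inr (u, h)}" "u \<in> fst G" "h \<in> fst H"
  using assms unfolding corona_def snd_conv Un_iff mem_Collect_eq by metis

lemma simple_graph_corona:
  assumes G: "simple_graph G" and H: "simple_graph H"
  shows "simple_graph (corona G H)"
  unfolding simple_graph_def
proof (intro conjI ballI)
  show "finite (fst (corona G H))"
    using G H unfolding corona_def simple_graph_def by simp
next
  fix e assume "e \<in> snd (corona G H)"
  then show "\<exists>x y. x \<noteq> y \<and> e = {x, y} \<and> x \<in> fst (corona G H) \<and> y \<in> fst (corona G H)"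
  proof (cases rule: corona_edgeE)
    case (base u v)
    with simple_graph_edgeD[OF G] show ?thesis
      by (intro exI[of _ "Inl u"] exI[of _ "Inl v"]) (auto simp: corona_def)
  next
    case (copy u a b)
    with simple_graph_edgeD[OF H] show ?thesis
      by (intro exI[of _ "Inr (u, a)"] exI[of _ "Inr (u, b)"]) (auto simp: corona_def)
  next
    case (spoke u h)
    then show ?thesis
      by (intro exI[of _ "Inl u"] exI[of _ "Inr (u, h)"]) (auto simp: corona_def)
  qed
qed

lemma induced_vlabel_01:
  assumes "finite (snd G)" and "\<forall>e\<in>snd G. f e \<in> {0, 1}"
  shows "induced_vlabel G f v = (if v \<in> \<Union>{e\<in>snd G. f e = 0} then 0 else 1)"
proof (cases "v \<in> \<Union>{e\<in>snd G. f e = 0}")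
  case True
  then obtain e where "e \<in> {e\<in>snd G. v \<in> e}" and "f e = 0"
    by blast
  then have "induced_vlabel G f v = 0"
    using assms(1) unfolding induced_vlabel_def by (subst prod_zero_iff) auto
  with True show ?thesis
    by simp
next
  case False
  then have "\<forall>e\<in>{e\<in>snd G. v \<in> e}. f e = 1"
    using assms(2) by fastforce
  with False show ?thesis
    unfolding induced_vlabel_def by simp
qed

lemma cordiality_defect_eq:
  assumes G: "simple_graph G" and f01: "\<forall>e\<in>snd G. f e \<in> {0, 1}"
  defines "Z \<equiv> {e\<in>snd G. f e = 0}"
  shows "int (v_count G f 0) + int (e_count G f 0) - (int (v_count G f 1) + int (e_count G f 1))
           = 2 * int (card (\<Union>Z) + card Z) - int (card (fst G) + card (snd G))"
proof -
  have finE: "finite (snd G)" and finV: "finite (fst G)" and UZ: "\<Union>Z \<subseteq> fst G"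
    using G simple_graph_finite_edges simple_graph_Union_edges unfolding Z_def simple_graph_def
    by blast+
  have finZ: "finite Z" and finUZ: "finite (\<Union>Z)"
    using finE finV UZ finite_subset unfolding Z_def by auto
  note label = induced_vlabel_01[OF finE f01, folded Z_def]
  have "{v\<in>fst G. induced_vlabel G f v = 0} = \<Union>Z"
    using UZ label by auto
  then have v0: "v_count G f 0 = card (\<Union>Z)"
    unfolding v_count_def by simp
  have "{v\<in>fst G. induced_vlabel G f v = 1} = fst G - \<Union>Z"
    using label by auto
  then have v1: "v_count G f 1 = card (fst G) - card (\<Union>Z)"
    unfolding v_count_def using UZ finUZ by (simp add: card_Diff_subset)
  have e0: "e_count G f 0 = card Z"
    unfolding e_count_def Z_def ..
  have "{e\<in>snd G. f e = 1} = snd G - Z"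
    using f01 unfolding Z_def by auto
  then have e1: "e_count G f 1 = card (snd G) - card Z"
    unfolding e_count_def using finZ by (simp add: Z_def card_Diff_subset)
  have "card (\<Union>Z) \<le> card (fst G)"
    using card_mono[OF finV UZ] .
  moreover have "card Z \<le> card (snd G)"
    by (rule card_mono[OF finE]) (simp add: Z_def)
  ultimately show ?thesis
    unfolding v0 v1 e0 e1 by simp
qed

lemma total_edge_product_cordial_iff_zero_edges:
  assumes G: "simple_graph G"
  shows "total_edge_product_cordial G \<longleftrightarrow>
    (\<exists>Z\<subseteq>snd G. \<bar>2 * int (card (\<Union>Z) + card Z) - int (card (fst G) + card (snd G))\<bar> \<le> 1)"
proof
  assume "total_edge_product_cordial G"
  then obtain f where f01: "\<forall>e\<in>snd G. f e \<in> {0, 1}" and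
    defect: "\<bar>int (v_count G f 0) + int (e_count G f 0) - (int (v_count G f 1) + int (e_count G f 1))\<bar> \<le> 1"
    unfolding total_edge_product_cordial_def total_edge_product_cordial_labeling_def by blast
  show "\<exists>Z\<subseteq>snd G. \<bar>2 * int (card (\<Union>Z) + card Z) - int (card (fst G) + card (snd G))\<bar> \<le> 1"
  proof (intro exI conjI)
    show "{e\<in>snd G. f e = 0} \<subseteq> snd G"
      by blast
    show "\<bar>2 * int (card (\<Union>{e\<in>snd G. f e = 0}) + card {e\<in>snd G. f e = 0})
            - int (card (fst G) + card (snd G))\<bar> \<le> 1"
      using defect unfolding cordiality_defect_eq[OF G f01] .
  qed
next
  assume "\<exists>Z\<subseteq>snd G. \<bar>2 * int (card (\<Union>Z) + card Z) - int (card (fst G) + card (snd G))\<bar> \<le> 1"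
  then obtain Z where ZE: "Z \<subseteq> snd G"
    and defect: "\<bar>2 * int (card (\<Union>Z) + card Z) - int (card (fst G) + card (snd G))\<bar> \<le> 1"
    by blast
  define f where "f e = (if e \<in> Z then 0 else 1 :: nat)" for e
  have f01: "\<forall>e\<in>snd G. f e \<in> {0, 1}"
    unfolding f_def by simp
  have "{e\<in>snd G. f e = 0} = Z"
    using ZE unfolding f_def by auto
  with defect have "total_edge_product_cordial_labeling G f"
    unfolding total_edge_product_cordial_labeling_def cordiality_defect_eq[OF G f01]
    using f01 by simp
  then show "total_edge_product_cordial G"
    unfolding total_edge_product_cordial_def by blast
qed

lemma not_total_edge_product_cordial_single_edge:
  assumes "u \<noteq> v"
  shows "\<not> total_edge_product_cordial ({u, v}, {{u, v}})"
proof -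
  have G: "simple_graph ({u, v}, {{u, v}})"
    using assms unfolding simple_graph_def by auto
  have "\<bar>2 * int (card (\<Union>Z) + card Z) - 3\<bar> = 3" if "Z \<subseteq> {{u, v}}" for Z :: "'a set set"
  proof -
    from that have "Z = {} \<or> Z = {{u, v}}"
      by blast
    then show ?thesis
      using assms by auto
  qed
  then show ?thesis
    unfolding total_edge_product_cordial_iff_zero_edges[OF G] using assms by auto
qed

definition base_edge :: "nat \<Rightarrow> (nat + nat \<times> nat) set" where
  "base_edge u = {Inl u, Inl (Suc u)}"

fun copy_edge :: "nat \<times> nat \<Rightarrow> (nat + nat \<times> nat) set" where
  "copy_edge (u, i) = {Inr (u, i), Inr (u, Suc i)}"

fun spoke :: "nat \<times> nat \<Rightarrow> (nat + nat \<times> nat) set" where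
  "spoke (u, i) = {Inl u, Inr (u, i)}"

lemma path_graph_edge_iff:
  "{a, b} \<in> snd (path_graph k) \<longleftrightarrow> (\<exists>i. Suc i < k \<and> {a, b} = {i, Suc i})"
  by (auto simp: path_graph_def)

lemma corona_path_vertices:
  "fst (corona (path_graph n) (path_graph m)) = Inl ` {..<n} \<union> Inr ` ({..<n} \<times> {..<m})"
  by (simp add: corona_def path_graph_def atLeast0LessThan)

lemma corona_path_edges:
  "snd (corona (path_graph n) (path_graph m)) =
     base_edge ` {..<n - 1} \<union> copy_edge ` ({..<n} \<times> {..<m - 1}) \<union> spoke ` ({..<n} \<times> {..<m})"
  (is "_ = ?B \<union> ?C \<union> ?S")
proof -
  let ?G = "corona (path_graph n) (path_graph m)"
  have "e \<in> ?B \<union> ?C \<union> ?S" if "e \<in> snd ?G" for e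
    using that
  proof (cases rule: corona_edgeE)
    case (base a b)
    then obtain i where "Suc i < n" and "e = base_edge i"
      unfolding path_graph_edge_iff by (auto simp: base_edge_def doubleton_eq_iff insert_commute)
    then show ?thesis
      by auto
  next
    case (copy u a b)
    then obtain i where "Suc i < m" and "e = copy_edge (u, i)"
      unfolding path_graph_edge_iff by (auto simp: doubleton_eq_iff insert_commute)
    moreover from this(1) have "(u, i) \<in> {..<n} \<times> {..<m - 1}"
      using copy by (simp add: path_graph_def)
    ultimately show ?thesis
      by blast
  next
    case (spoke u h)
    then have "e = spoke (u, h)" and "(u, h) \<in> {..<n} \<times> {..<m}"
      by (auto simp: path_graph_def)
    then show ?thesis
      by blast
  qed
  moreover have "base_edge i \<in> snd ?G" if "i \<in> {..<n - 1}" for i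
  proof -
    have "{i, Suc i} \<in> snd (path_graph n)"
      using that by (auto simp: path_graph_def)
    then show ?thesis
      unfolding corona_def snd_conv base_edge_def by blast
  qed
  moreover have "copy_edge x \<in> snd ?G" if x_in: "x \<in> {..<n} \<times> {..<m - 1}" for x
  proof -
    obtain u i where x: "x = (u, i)"
      by (cases x)
    then have "u \<in> fst (path_graph n)" and "Suc i < m"
      using x_in by (auto simp: path_graph_def)
    moreover from this(2) have "{i, Suc i} \<in> snd (path_graph m)"
      unfolding path_graph_def snd_conv by blast
    ultimately show ?thesis
      unfolding x copy_edge.simps corona_def snd_conv by blast
  qed
  moreover have "spoke x \<in> snd ?G" if "x \<in> {..<n} \<times> {..<m}" for x
    using that unfolding corona_def path_graph_def by (cases x) auto
  ultimately show ?thesis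
    by blast
qed

lemma card_corona_path_edge_sets:
  assumes "finite P" and "finite I" and "finite S"
  shows "card (base_edge ` P \<union> copy_edge ` I \<union> spoke ` S) = card P + card I + card S"
proof -
  have "inj_on base_edge P" and "inj_on copy_edge I" and "inj_on spoke S"
    by (auto simp: inj_on_def base_edge_def doubleton_eq_iff)
  moreover have "base_edge u \<noteq> copy_edge x" and "base_edge u \<noteq> spoke y" and "copy_edge x \<noteq> spoke y"
    for u x y
    by (cases x; cases y; simp add: base_edge_def doubleton_eq_iff)+
  then have "base_edge ` P \<inter> copy_edge ` I = {}"
    and "(base_edge ` P \<union> copy_edge ` I) \<inter> spoke ` S = {}"
    by blast+
  ultimately show ?thesis
    using assms by (simp add: card_Un_disjoint card_image)
qed

lemma card_corona_path:
  assumes "1 \<le> n" and "1 \<le> m"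
  shows "card (fst (corona (path_graph n) (path_graph m)))
           + card (snd (corona (path_graph n) (path_graph m))) = 3 * n * m + n - 1"
proof -
  have "card (fst (corona (path_graph n) (path_graph m))) = n + n * m"
    unfolding corona_path_vertices by (simp add: card_Plus[unfolded Plus_def] card_cartesian_product)
  moreover have "card (snd (corona (path_graph n) (path_graph m))) = (n - 1) + n * (m - 1) + n * m"
    unfolding corona_path_edges by (simp add: card_corona_path_edge_sets card_cartesian_product)
  moreover obtain n' m' where "n = Suc n'" and "m = Suc m'"
    using assms by (cases n; cases m) auto
  ultimately show ?thesis
    by (simp add: algebra_simps)
qed

lemma corona_path_zero_edges:
  assumes "a < n" and "0 < j" and "j \<le> m" and "q < j" and "p \<le> a"
  obtains Z where "Z \<subseteq> snd (corona (path_graph n) (path_graph m))"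
    and "card (\<Union>Z) + card Z = 3 * a * m + 2 * j + q + p + 1"
proof -
  define S where "S = {..<a} \<times> {..<m} \<union> {a} \<times> {..<j}"
  define I where "I = {..<a} \<times> {..<m - 1} \<union> {a} \<times> {..<q}"
  define Z where "Z = base_edge ` {..<p} \<union> copy_edge ` I \<union> spoke ` S"
  have card_S: "card S = a * m + j"
    unfolding S_def by (subst card_Un_disjoint) auto
  have card_I: "card I = a * (m - 1) + q"
    unfolding I_def by (subst card_Un_disjoint) auto
  have card_Z: "card Z = p + card I + card S"
    unfolding Z_def by (simp add: card_corona_path_edge_sets S_def I_def)
  \<comment> \<open>q < j and p \<le> a make every chosen path edge join vertices already covered by spokes\<close>
  have "e \<subseteq> Inl ` {..a} \<union> Inr ` S" if "e \<in> Z" for e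
    using that assms unfolding Z_def by (auto simp: S_def I_def base_edge_def)
  moreover have "Inl u \<in> \<Union>Z" if "u \<le> a" for u
  proof -
    have "(u, 0) \<in> S"
      using that assms by (auto simp: S_def)
    then show ?thesis
      unfolding Z_def by force
  qed
  moreover have "Inr x \<in> \<Union>Z" if "x \<in> S" for x
    using that unfolding Z_def by (cases x) force
  ultimately have Union_Z: "\<Union>Z = Inl ` {..a} \<union> Inr ` S"
    by blast
  have card_Union_Z: "card (\<Union>Z) = Suc a + card S"
    unfolding Union_Z using card_Plus[of "{..a}" S, unfolded Plus_def] by (simp add: S_def)
  have "Z \<subseteq> snd (corona (path_graph n) (path_graph m))"
    unfolding corona_path_edges Z_def S_def I_def using assms by (intro Un_mono image_mono) auto
  moreover have "card (\<Union>Z) + card Z = 3 * a * m + 2 * j + q + p + 1"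
  proof -
    obtain m' where "m = Suc m'"
      using assms by (cases m) auto
    then show ?thesis
      unfolding card_Union_Z card_Z card_S card_I by (simp add: algebra_simps)
  qed
  ultimately show thesis
    by (rule that)
qed

lemma corona_path_cordial_parameters:
  fixes n m :: nat
  assumes "1 \<le> n" and "1 \<le> m" and "\<not> (n = 1 \<and> m = 1)"
  obtains a j q p where "a < n" and "0 < j" and "j \<le> m" and "q < j" and "p \<le> a"
    and "\<bar>2 * int (3 * a * m + 2 * j + q + p + 1) - int (3 * n * m + n - 1)\<bar> \<le> 1"
proof -
  have "(\<exists>b. n = 2 * b + 2) \<or> (\<exists>b t. n = 2 * b + 1 \<and> m = 2 * t + 2)
      \<or> (\<exists>b t. n = 2 * b + 1 \<and> m = 2 * t + 3) \<or> (\<exists>b. n = 2 * b + 3 \<and> m = 1)"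
    using assms by presburger
  then consider (n_even) b where "n = 2 * b + 2"
    | (m_even) b t where "n = 2 * b + 1" and "m = 2 * t + 2"
    | (m_odd) b t where "n = 2 * b + 1" and "m = 2 * t + 3"
    | (m_one) b where "n = 2 * b + 3" and "m = 1"
    by blast
  then show thesis
  proof cases
    case (n_even b)
    obtain k where "m = Suc k"
      using assms by (cases m) auto
    with n_even show thesis
      by (intro that[of b m k b]) (simp_all add: algebra_simps)
  next
    case (m_even b t)
    then show thesis
      by (intro that[of b "t + 1" t b]) (simp_all add: algebra_simps)
  next
    case (m_odd b t)
    then show thesis
      by (intro that[of b "t + 2" t b]) (simp_all add: algebra_simps)
  next
    case (m_one b)
    then show thesis
      by (intro that[of "b + 1" 1 0 b]) (simp_all add: algebra_simps)
  qed
qed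

theorem theorem3p1:
  fixes n m :: nat
  assumes "n \<ge> 1" and "m \<ge> 1"
  shows "total_edge_product_cordial (corona (path_graph n) (path_graph m))
           \<longleftrightarrow> \<not> (n = 1 \<and> m = 1)"
proof
  assume "total_edge_product_cordial (corona (path_graph n) (path_graph m))"
  moreover have "corona (path_graph 1) (path_graph 1) = ({Inl 0, Inr (0, 0)}, {{Inl 0, Inr (0, 0)}})"
    by (auto simp: corona_def path_graph_def)
  ultimately show "\<not> (n = 1 \<and> m = 1)"
    using not_total_edge_product_cordial_single_edge by fastforce
next
  let ?G = "corona (path_graph n) (path_graph m)"
  assume "\<not> (n = 1 \<and> m = 1)"
  with assms obtain a j q p where params: "a < n" "0 < j" "j \<le> m" "q < j" "p \<le> a"
    and defect: "\<bar>2 * int (3 * a * m + 2 * j + q + p + 1) - int (3 * n * m + n - 1)\<bar> \<le> 1"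
    by (rule corona_path_cordial_parameters)
  from params obtain Z where Z: "Z \<subseteq> snd ?G"
    and weight: "card (\<Union>Z) + card Z = 3 * a * m + 2 * j + q + p + 1"
    by (rule corona_path_zero_edges)
  have G: "simple_graph ?G"
    by (intro simple_graph_corona simple_graph_path_graph)
  from Z defect show "total_edge_product_cordial ?G"
    unfolding total_edge_product_cordial_iff_zero_edges[OF G] weight[symmetric]
      card_corona_path[OF assms, symmetric]
    by blast
qed

end
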